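(* Let $d,q$ be integers with $0\le q<d$, $\gcd(d,q)=1$ and $d\mid q^3+1$, let $\xi$ be a primitive $d$-th root of unity, and $G=\langle\mathrm{diag}(1,\xi,\xi^q),B\rangle\subset\mathrm{GL}_3(\mathbb{C})$ with $B$ the cyclic permutation matrix $(x,y,z)\mapsto(y,z,x)$. Then the number of conjugacy classes of $G$ equals $\frac{d^2+8\gcd(d,q^2-q+1)}{3}$. *)

theory Defs
  imports "HOL-Analysis.Analysis"
begin

inductive_set gen_mat_group :: "(complex^'n^'n) set \<Rightarrow> (complex^'n^'n) set"
  for S :: "(complex^'n^'n) set" where
  one: "mat 1 \<in> gen_mat_group S"
| gen: "A \<in> S \<Longrightarrow> A \<in> gen_mat_group S"
| mult: "A \<in> gen_mat_group S \<Longrightarrow> C \<in> gen_mat_group S \<Longrightarrow> A ** C \<in> gen_mat_group S"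
| inv: "A \<in> gen_mat_group S \<Longrightarrow> matrix_inv A \<in> gen_mat_group S"

definition conj_class :: "(complex^'n^'n) set \<Rightarrow> complex^'n^'n \<Rightarrow> (complex^'n^'n) set" where
  "conj_class G g = {h ** g ** matrix_inv h | h. h \<in> G}"

definition conj_classes :: "(complex^'n^'n) set \<Rightarrow> (complex^'n^'n) set set" where
  "conj_classes G = conj_class G ` G"

definition primitive_root_of_unity :: "nat \<Rightarrow> complex \<Rightarrow> bool" where
  "primitive_root_of_unity d \<xi> \<longleftrightarrow> d > 0 \<and> \<xi> ^ d = 1 \<and> (\<forall>k. 0 < k \<and> k < d \<longrightarrow> \<xi> ^ k \<noteq> 1)"

definition diagA :: "complex \<Rightarrow> nat \<Rightarrow> complex^3^3" where
  "diagA \<xi> q = vector [vector [1, 0, 0], vector [0, \<xi>, 0], vector [0, 0, \<xi> ^ q]]"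

definition permB :: "complex^3^3" where
  "permB = vector [vector [0, 1, 0], vector [0, 0, 1], vector [1, 0, 0]]"

end

theory Submission
  imports Defs
begin

text \<open>Coordinates are indexed by \<open>\<int>/3\<close>. Both generators are monomial matrices \<open>M(x, k)\<close>, with
  entry \<open>\<xi> ^ x\<^sub>i\<close> at position \<open>(i, i + k)\<close>, and conjugation by \<open>M(y, j)\<close> sends \<open>M(x, k)\<close> to
  \<open>M(y + x(\<cdot> + j) - y(\<cdot> + k), k)\<close>. Hence \<open>G\<close> is the set of all \<open>M(x, k)\<close> with \<open>x\<close> in the lattice
  \<open>\<Lambda> = {x. d dvd q\<^sup>2 x\<^sub>1 - q x\<^sub>2 + x\<^sub>0}\<close>, which is shift invariant because \<open>q\<^sup>3 \<equiv> -1\<close> and \<open>q\<close> is a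
  unit modulo \<open>d\<close>. Let \<open>g = gcd(d, q\<^sup>2 - q + 1)\<close>.

  For \<open>k = 0\<close> the class of \<open>M(x, 0)\<close> is the orbit of \<open>x\<close> under the cyclic shift, an operation of
  order 3 on the \<open>d\<^sup>2\<close> diagonal elements whose fixed points are the constant vectors \<open>c\<close> with
  \<open>d dvd (q\<^sup>2 - q + 1) c\<close>; there are \<open>g\<close> of them, so there are \<open>(d\<^sup>2 + 2g)/3\<close> diagonal classes.
  For \<open>k = 1, 2\<close> the vectors \<open>y - y(\<cdot> + k)\<close>, \<open>y \<in> \<Lambda>\<close>, are exactly the \<open>x \<in> \<Lambda>\<close> with
  \<open>g dvd (1 - q) x\<^sub>1 + x\<^sub>2\<close>, so each of these two cosets splits into \<open>g\<close> classes. In total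
  \<open>(d\<^sup>2 + 2g)/3 + 2g = (d\<^sup>2 + 8g)/3\<close>.\<close>

text \<open>Not a simp rule: it would stop \<open>vector_3\<close> from evaluating the row index \<open>3\<close>.\<close>
lemma three_eq_zero_3: "(3::3) = 0"
  by simp

lemma exhaust_3_zero: "(i::3) = 0 \<or> i = 1 \<or> i = 2"
  using exhaust_3[of i] three_eq_zero_3 by auto

lemma forall_3_zero: "(\<forall>i::3. P i) \<longleftrightarrow> P 0 \<and> P 1 \<and> P 2"
  by (metis exhaust_3_zero)

definition triple :: "'a \<Rightarrow> 'a \<Rightarrow> 'a \<Rightarrow> 3 \<Rightarrow> 'a" where
  "triple a b c i = (if i = 0 then a else if i = 1 then b else c)"

lemma triple_simps [simp]:
  "triple a b c 0 = a" "triple a b c 1 = b" "triple a b c 2 = c" "triple a b c 3 = a"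
  by (simp_all add: triple_def three_eq_zero_3)

lemma primitive_root_nonzero: "primitive_root_of_unity d \<xi> \<Longrightarrow> \<xi> \<noteq> 0"
  unfolding primitive_root_of_unity_def by (metis power_0_left zero_neq_one not_gr0)

lemma primitive_root_powi_eq_1_iff:
  assumes "primitive_root_of_unity d \<xi>"
  shows "\<xi> powi n = 1 \<longleftrightarrow> int d dvd n"
proof -
  have d: "d > 0" "\<xi> ^ d = 1" and small: "\<And>k. 0 < k \<Longrightarrow> k < d \<Longrightarrow> \<xi> ^ k \<noteq> 1"
    using assms unfolding primitive_root_of_unity_def by auto
  have "\<xi> \<noteq> 0" using primitive_root_nonzero[OF assms] .
  define r where "r = nat (n mod int d)"
  have r: "r < d" "int r = n mod int d" using d(1) unfolding r_def by (simp_all add: nat_less_iff)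
  have "\<xi> powi n = \<xi> powi (int d * (n div int d) + n mod int d)" by simp
  also have "\<dots> = (\<xi> powi int d) powi (n div int d) * \<xi> powi (n mod int d)"
    using \<open>\<xi> \<noteq> 0\<close> by (simp only: power_int_add power_int_mult simp_thms)
  also have "\<dots> = \<xi> ^ r" using d(2) by (simp flip: r(2) add: power_int_of_nat)
  finally have "\<xi> powi n = 1 \<longleftrightarrow> r = 0" using small[of r] r(1) d by auto
  then show ?thesis using r(2) by (auto simp: dvd_eq_mod_eq_0)
qed

lemma primitive_root_powi_eq_iff:
  assumes "primitive_root_of_unity d \<xi>"
  shows "\<xi> powi a = \<xi> powi b \<longleftrightarrow> int d dvd a - b"
proof -
  have "\<xi> \<noteq> 0" using primitive_root_nonzero[OF assms] .
  then have "\<xi> powi a = \<xi> powi (a - b) * \<xi> powi b" by (simp flip: power_int_add)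
  then show ?thesis using \<open>\<xi> \<noteq> 0\<close> primitive_root_powi_eq_1_iff[OF assms, of "a - b"] by auto
qed

section \<open>Monomial matrices\<close>

definition monomial_mat ::
    "'a::field \<Rightarrow> ('n::{finite,ab_group_add} \<Rightarrow> int) \<Rightarrow> 'n
      \<Rightarrow> 'a^'n::{finite,ab_group_add}^'n::{finite,ab_group_add}" where
  "monomial_mat \<xi> x k = (\<chi> i j. if j = i + k then \<xi> powi x i else 0)"

lemma monomial_mat_mult:
  assumes "\<xi> \<noteq> 0"
  shows "monomial_mat \<xi> x k ** monomial_mat \<xi> y l = monomial_mat \<xi> (\<lambda>i. x i + y (i + k)) (k + l)"
proof -
  have "(\<Sum>m\<in>UNIV. (if m = i + k then \<xi> powi x i else 0) * (if j = m + l then \<xi> powi y m else 0))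
      = (if j = i + (k + l) then \<xi> powi (x i + y (i + k)) else 0)" for i j
  proof -
    have "(\<Sum>m\<in>UNIV. (if m = i + k then \<xi> powi x i else 0) * (if j = m + l then \<xi> powi y m else 0))
        = (\<Sum>m\<in>UNIV. if m = i + k then \<xi> powi x i * (if j = m + l then \<xi> powi y m else 0) else 0)"
      by (rule sum.cong) auto
    also have "\<dots> = \<xi> powi x i * (if j = i + k + l then \<xi> powi y (i + k) else 0)"
      by (simp add: sum.delta')
    finally show ?thesis using assms by (simp add: power_int_add add.assoc)
  qed
  then show ?thesis unfolding monomial_mat_def by (simp add: matrix_matrix_mult_def vec_eq_iff)
qed

lemma monomial_mat_zero: "monomial_mat \<xi> (\<lambda>i. 0) 0 = mat 1"
  unfolding monomial_mat_def mat_def by (simp add: vec_eq_iff)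

lemma matrix_inv_unique:
  fixes A B :: "'a::semiring_1^'n^'n"
  assumes "A ** B = mat 1" "B ** A = mat 1"
  shows "matrix_inv A = B"
proof -
  let ?C = "matrix_inv A"
  have C: "A ** ?C = mat 1 \<and> ?C ** A = mat 1"
    unfolding matrix_inv_def by (rule someI[of _ B]) (use assms in auto)
  have "?C = ?C ** (A ** B)" using assms by (simp add: matrix_mul_rid)
  also have "\<dots> = (?C ** A) ** B" by (simp add: matrix_mul_assoc)
  also have "\<dots> = B" using C by (simp add: matrix_mul_lid)
  finally show ?thesis .
qed

lemma monomial_mat_inverse:
  assumes "\<xi> \<noteq> 0"
  shows "matrix_inv (monomial_mat \<xi> x k) = monomial_mat \<xi> (\<lambda>i. - x (i - k)) (- k)"
  by (rule matrix_inv_unique) (simp_all add: monomial_mat_mult[OF assms] monomial_mat_zero)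

lemma monomial_mat_conj:
  assumes "\<xi> \<noteq> 0"
  shows "monomial_mat \<xi> y j ** monomial_mat \<xi> x k ** matrix_inv (monomial_mat \<xi> y j)
    = monomial_mat \<xi> (\<lambda>i. y i + x (i + j) - y (i + k)) k"
  by (simp add: monomial_mat_mult monomial_mat_inverse assms algebra_simps)

lemma monomial_mat_eq_iff:
  assumes "primitive_root_of_unity d \<xi>"
  shows "monomial_mat \<xi> x k = monomial_mat \<xi> y l \<longleftrightarrow> k = l \<and> (\<forall>i. int d dvd x i - y i)"
proof
  assume eq: "monomial_mat \<xi> x k = monomial_mat \<xi> y l"
  have entry: "(if j = i + k then \<xi> powi x i else 0) = (if j = i + l then \<xi> powi y i else 0)" for i j
    using eq unfolding monomial_mat_def by (simp add: vec_eq_iff)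
  have "k = l" using entry[of k 0] primitive_root_nonzero[OF assms] by (auto split: if_splits)
  moreover have "int d dvd x i - y i" for i
    using entry[of "i + k" i] \<open>k = l\<close> primitive_root_powi_eq_iff[OF assms] by simp
  ultimately show "k = l \<and> (\<forall>i. int d dvd x i - y i)" by blast
next
  assume "k = l \<and> (\<forall>i. int d dvd x i - y i)"
  then show "monomial_mat \<xi> x k = monomial_mat \<xi> y l"
    unfolding monomial_mat_def by (simp add: vec_eq_iff primitive_root_powi_eq_iff[OF assms])
qed

lemma diagA_eq_monomial_mat: "diagA \<xi> q = monomial_mat \<xi> (triple (int q) 0 1) 0"
  unfolding diagA_def monomial_mat_def vec_eq_iff forall_3
  by (simp add: vector_3 power_int_of_nat)

lemma permB_eq_monomial_mat: "permB = monomial_mat \<xi> (\<lambda>i. 0) 1"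
  unfolding permB_def monomial_mat_def vec_eq_iff forall_3
  by (simp add: vector_3)

lemma order_3_orbit_card:
  assumes "t (t (t x)) = x" and "t x \<noteq> x"
  shows "card {x, t x, t (t x)} = 3"
proof -
  have "t (t x) \<noteq> t x" using assms by metis
  moreover have "t (t x) \<noteq> x" using assms by metis
  ultimately show ?thesis using assms(2) by auto
qed

lemma card_orbits_order_3:
  assumes "finite X" and maps: "\<And>x. x \<in> X \<Longrightarrow> t x \<in> X"
    and order_3: "\<And>x. x \<in> X \<Longrightarrow> t (t (t x)) = x"
  shows "3 * card ((\<lambda>x. {x, t x, t (t x)}) ` X) = card X + 2 * card {x\<in>X. t x = x}"
proof -
  let ?O = "\<lambda>x. {x, t x, t (t x)}"
  define F where "F = {x\<in>X. t x = x}"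
  define N where "N = X - F"
  have fin: "finite F" "finite N" using \<open>finite X\<close> unfolding F_def N_def by auto
  have X_split: "X = F \<union> N" unfolding N_def F_def by auto
  have orbit_eq: "?O y = ?O x" if "x \<in> X" "y \<in> ?O x" for x y
    using that order_3[OF that(1)] order_3[OF maps[OF that(1)]] by auto
  have orbit_N: "?O x \<subseteq> N" "card (?O x) = 3" if "x \<in> N" for x
  proof -
    have x: "x \<in> X" "t x \<noteq> x" using that unfolding N_def F_def by auto
    show "card (?O x) = 3" using order_3_orbit_card[OF order_3 x(2)] x(1) .
    have "t y \<noteq> y" if "y \<in> ?O x" for y
      using that x order_3[OF x(1)] by auto
    then show "?O x \<subseteq> N" using x(1) maps unfolding N_def F_def by blast
  qed
  have "\<Union> (?O ` N) = N" using orbit_N(1) by auto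
  moreover have "3 * card (?O ` N) = card (\<Union> (?O ` N))"
  proof (rule card_partition)
    show "c1 \<inter> c2 = {}" if "c1 \<in> ?O ` N" "c2 \<in> ?O ` N" "c1 \<noteq> c2" for c1 c2
      using that orbit_eq unfolding N_def by blast
  qed (use fin orbit_N(2) in auto)
  moreover have "card (?O ` F) = card F"
  proof -
    have "?O ` F = (\<lambda>x. {x}) ` F" unfolding F_def by auto
    then show ?thesis by (simp add: card_image)
  qed
  moreover have "card (?O ` X) = card (?O ` F) + card (?O ` N)"
  proof -
    have "?O x \<noteq> ?O y" if "x \<in> F" "y \<in> N" for x y
      using that orbit_N(2)[OF that(2)] unfolding F_def by auto
    then have "?O ` F \<inter> ?O ` N = {}" by blast
    then show ?thesis using fin X_split by (simp add: image_Un card_Un_disjoint)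
  qed
  moreover have "card X = card F + card N"
    by (subst X_split, rule card_Un_disjoint) (use fin in \<open>auto simp: N_def\<close>)
  ultimately show ?thesis unfolding F_def by simp
qed

lemma card_annihilated_residues:
  fixes D M :: int
  assumes "D > 0"
  shows "card {a. 0 \<le> a \<and> a < D \<and> D dvd M * a} = nat (gcd D M)"
proof -
  define g where "g = gcd D M"
  define E where "E = D div g"
  have g: "g > 0" unfolding g_def using assms by simp
  have D: "D = g * E" unfolding E_def g_def by simp
  then have E: "E > 0" using assms g by (simp add: zero_less_mult_iff)
  have M: "M = g * (M div g)" unfolding g_def by simp
  have "coprime E (M div g)"
    unfolding E_def g_def by (rule div_gcd_coprime) (use assms in simp)
  have annihilated: "D dvd M * a \<longleftrightarrow> E dvd a" for a
  proof -
    have "D dvd M * a \<longleftrightarrow> g * E dvd g * (M div g * a)" by (subst M, subst D) (simp add: mult.assoc)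
    also have "\<dots> \<longleftrightarrow> E dvd (M div g) * a" using g by simp
    also have "\<dots> \<longleftrightarrow> E dvd a" using \<open>coprime E (M div g)\<close> by (simp add: coprime_dvd_mult_right_iff)
    finally show ?thesis .
  qed
  have "{a. 0 \<le> a \<and> a < D \<and> D dvd M * a} = (\<lambda>s. E * s) ` {0..<g}"
  proof (intro set_eqI iffI)
    fix a assume "a \<in> {a. 0 \<le> a \<and> a < D \<and> D dvd M * a}"
    then obtain s where "a = E * s" "0 \<le> E * s" "E * s < E * g"
      unfolding annihilated by (auto simp: D mult.commute[of g] elim!: dvdE)
    then show "a \<in> (\<lambda>s. E * s) ` {0..<g}" using E by (auto simp: zero_le_mult_iff)
  next
    fix a assume "a \<in> (\<lambda>s. E * s) ` {0..<g}"
    then obtain s where "a = E * s" "0 \<le> s" "s < g" by (metis atLeastLessThan_iff imageE)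
    then show "a \<in> {a. 0 \<le> a \<and> a < D \<and> D dvd M * a}"
      unfolding annihilated using E by (auto simp: D mult.commute[of g])
  qed
  moreover have "inj_on (\<lambda>s. E * s) {0..<g}" using E by (simp add: inj_on_def)
  ultimately show ?thesis unfolding g_def[symmetric] by (simp add: card_image)
qed

lemma residues_eq:
  fixes a b D :: int
  assumes "0 \<le> a" "a < D" "0 \<le> b" "b < D" "D dvd a - b"
  shows "a = b"
  using assms mod_eq_dvd_iff[of a D b] by simp

section \<open>The group as a set of monomial matrices\<close>

locale diag_perm_group =
  fixes d q :: nat and \<xi> :: complex
  assumes coprime_d_q: "gcd d q = 1" and d_dvd: "d dvd q ^ 3 + 1"
    and primitive: "primitive_root_of_unity d \<xi>"
begin

abbreviation mon :: "(3 \<Rightarrow> int) \<Rightarrow> 3 \<Rightarrow> complex^3^3" where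
  "mon \<equiv> monomial_mat \<xi>"

abbreviation generated :: "(complex^3^3) set" where
  "generated \<equiv> gen_mat_group {diagA \<xi> q, permB}"

definition exp_lattice :: "(3 \<Rightarrow> int) set" where
  "exp_lattice = {x. int d dvd int q ^ 2 * x 1 - int q * x 2 + x 0}"

definition monomial_group :: "(complex^3^3) set" where
  "monomial_group = {mon x k | x k. x \<in> exp_lattice}"

lemma xi_nonzero: "\<xi> \<noteq> 0"
  using primitive_root_nonzero[OF primitive] .

lemma d_pos: "d > 0"
  using primitive unfolding primitive_root_of_unity_def by simp

lemma mon_mult: "mon x k ** mon y l = mon (\<lambda>i. x i + y (i + k)) (k + l)"
  using monomial_mat_mult[OF xi_nonzero] .

lemma mon_inverse: "matrix_inv (mon x k) = mon (\<lambda>i. - x (i - k)) (- k)"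
  using monomial_mat_inverse[OF xi_nonzero] .

lemma mon_conj: "mon y j ** mon x k ** matrix_inv (mon y j) = mon (\<lambda>i. y i + x (i + j) - y (i + k)) k"
  using monomial_mat_conj[OF xi_nonzero] .

lemma mon_eq_iff: "mon x k = mon y l \<longleftrightarrow> k = l \<and> (\<forall>i. int d dvd x i - y i)"
  using monomial_mat_eq_iff[OF primitive] .

lemma in_exp_lattice: "x \<in> exp_lattice \<longleftrightarrow> int d dvd int q ^ 2 * x 1 - int q * x 2 + x 0"
  unfolding exp_lattice_def by simp

lemma exp_lattice_add: "x \<in> exp_lattice \<Longrightarrow> y \<in> exp_lattice \<Longrightarrow> (\<lambda>i. x i + y i) \<in> exp_lattice"
  unfolding in_exp_lattice by (drule (1) dvd_add) (simp add: algebra_simps)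

lemma exp_lattice_smult: "x \<in> exp_lattice \<Longrightarrow> (\<lambda>i. c * x i) \<in> exp_lattice"
  unfolding in_exp_lattice by (drule dvd_mult[of _ _ c]) (simp add: algebra_simps)

lemma exp_lattice_uminus: "x \<in> exp_lattice \<Longrightarrow> (\<lambda>i. - x i) \<in> exp_lattice"
  using exp_lattice_smult[of x "-1"] by simp

lemma exp_lattice_zero: "(\<lambda>i. 0) \<in> exp_lattice"
  unfolding in_exp_lattice by simp

lemma exp_lattice_const_iff: "(\<lambda>i. c) \<in> exp_lattice \<longleftrightarrow> int d dvd (int q ^ 2 - int q + 1) * c"
  unfolding in_exp_lattice by (simp add: algebra_simps)

text \<open>Shift invariance is where both arithmetic hypotheses enter: multiplying the defining
  congruence by \<open>q\<close> and using \<open>q\<^sup>3 \<equiv> -1 (mod d)\<close> gives \<open>q\<close> times the shifted congruence,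
  and \<open>q\<close> is a unit modulo \<open>d\<close>.\<close>
lemma exp_lattice_shift1:
  assumes "x \<in> exp_lattice"
  shows "(\<lambda>i. x (i + 1)) \<in> exp_lattice"
proof -
  let ?Q = "int q"
  have "int d dvd ?Q ^ 3 + 1"
    using d_dvd by (metis int_dvd_int_iff of_nat_1 of_nat_add of_nat_power)
  then have "int d dvd ?Q * (?Q ^ 3 + 1) * x 1 - ?Q ^ 2 * (?Q ^ 2 * x 1 - ?Q * x 2 + x 0)"
    using assms unfolding in_exp_lattice by (simp add: dvd_diff)
  also have "?Q * (?Q ^ 3 + 1) * x 1 - ?Q ^ 2 * (?Q ^ 2 * x 1 - ?Q * x 2 + x 0)
      = ?Q * (?Q ^ 2 * x 2 - ?Q * x 0 + x 1)"
    by (simp add: algebra_simps power2_eq_square power3_eq_cube)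
  finally have "int d dvd ?Q ^ 2 * x 2 - ?Q * x 0 + x 1"
    using coprime_d_q by (simp add: coprime_dvd_mult_right_iff coprime_iff_gcd_eq_1 gcd_int_int_eq)
  then show ?thesis unfolding in_exp_lattice by (simp add: three_eq_zero_3)
qed

lemma exp_lattice_shift:
  assumes "x \<in> exp_lattice"
  shows "(\<lambda>i. x (i + j)) \<in> exp_lattice"
proof -
  have "(\<lambda>i. x (i + 2)) \<in> exp_lattice"
    using exp_lattice_shift1[OF exp_lattice_shift1[OF assms]] by (simp add: add.assoc)
  then show ?thesis using exhaust_3_zero[of j] assms exp_lattice_shift1[OF assms] by auto
qed

lemma mon_in_monomial_group: "x \<in> exp_lattice \<Longrightarrow> mon x k \<in> monomial_group"
  unfolding monomial_group_def by blast

lemma generated_subset_monomial_group: "generated \<subseteq> monomial_group"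
proof
  fix M assume "M \<in> generated"
  then show "M \<in> monomial_group"
  proof induction
    case one
    show ?case using mon_in_monomial_group[OF exp_lattice_zero, of 0] by (simp add: monomial_mat_zero)
  next
    case (gen A)
    have "triple (int q) 0 1 \<in> exp_lattice" unfolding in_exp_lattice by simp
    then show ?case using gen mon_in_monomial_group exp_lattice_zero
      by (auto simp: diagA_eq_monomial_mat permB_eq_monomial_mat[of \<xi>])
  next
    case (mult A C)
    then obtain x k y l where "A = mon x k" "C = mon y l" "x \<in> exp_lattice" "y \<in> exp_lattice"
      unfolding monomial_group_def by blast
    then show ?case
      by (simp add: mon_mult mon_in_monomial_group exp_lattice_add exp_lattice_shift)
  next
    case (inv A)
    then obtain x k where "A = mon x k" "x \<in> exp_lattice" unfolding monomial_group_def by blast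
    then show ?case
      using exp_lattice_uminus[OF exp_lattice_shift, of x "- k"]
      by (simp add: mon_inverse mon_in_monomial_group)
  qed
qed

lemma diag_generated_add:
  "mon x 0 \<in> generated \<Longrightarrow> mon y 0 \<in> generated \<Longrightarrow> mon (\<lambda>i. x i + y i) 0 \<in> generated"
  using gen_mat_group.mult[of "mon x 0" _ "mon y 0"] by (simp add: mon_mult)

lemma diag_generated_smult:
  assumes "mon x 0 \<in> generated"
  shows "mon (\<lambda>i. c * x i) 0 \<in> generated"
proof -
  have nat: "mon (\<lambda>i. int n * x i) 0 \<in> generated" for n
  proof (induction n)
    case 0
    show ?case using gen_mat_group.one by (simp add: monomial_mat_zero)
  next
    case (Suc n)
    then show ?case using diag_generated_add[OF Suc assms] by (simp add: algebra_simps)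
  qed
  show ?thesis
  proof (cases "c \<ge> 0")
    case True
    then show ?thesis using nat[of "nat c"] by simp
  next
    case False
    then show ?thesis
      using gen_mat_group.inv[OF nat[of "nat (- c)"]] by (simp add: mon_inverse)
  qed
qed

lemma permB_power_generated: "mon (\<lambda>i. 0) k \<in> generated"
proof -
  have B: "mon (\<lambda>i. 0) 1 \<in> generated"
    using gen_mat_group.gen[of permB] permB_eq_monomial_mat[of \<xi>] by simp
  have "mon (\<lambda>i. 0) 2 \<in> generated"
    using gen_mat_group.mult[OF B B] by (simp add: mon_mult)
  then show ?thesis
    using exhaust_3_zero[of k] B gen_mat_group.one monomial_mat_zero by metis
qed

lemma diag_generated_shift:
  assumes "mon x 0 \<in> generated"
  shows "mon (\<lambda>i. x (i + 1)) 0 \<in> generated"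
  using gen_mat_group.mult[OF gen_mat_group.mult[OF permB_power_generated[of 1] assms]
      gen_mat_group.inv[OF permB_power_generated[of 1]]]
  by (simp add: mon_conj)

text \<open>Modulo \<open>d\<close>, every lattice vector is an integer combination of the exponent vector
  \<open>v = (q, 0, 1)\<close> of \<open>diagA \<xi> q\<close> and of \<open>u = (-q\<^sup>2, 1, 0)\<close>, which is the shift of \<open>v\<close>
  minus \<open>q v\<close>.\<close>
lemma monomial_group_subset_generated: "monomial_group \<subseteq> generated"
proof
  fix M assume "M \<in> monomial_group"
  then obtain x k where M: "M = mon x k" and x: "x \<in> exp_lattice"
    unfolding monomial_group_def by blast
  let ?v = "triple (int q) 0 1" and ?u = "triple (- (int q ^ 2)) 1 0"
  have v: "mon ?v 0 \<in> generated"
    using gen_mat_group.gen[of "diagA \<xi> q"] diagA_eq_monomial_mat by simp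
  have "?u = (\<lambda>i. ?v (i + 1) + (- int q) * ?v i)"
    by (simp add: fun_eq_iff forall_3_zero power2_eq_square)
  then have u: "mon ?u 0 \<in> generated"
    using diag_generated_add[OF diag_generated_shift[OF v] diag_generated_smult[OF v, of "- int q"]] by simp
  have "mon x 0 = mon (\<lambda>i. x 1 * ?u i + x 2 * ?v i) 0"
    using x unfolding mon_eq_iff forall_3_zero in_exp_lattice
    by (simp add: algebra_simps power2_eq_square)
  then have "mon x 0 \<in> generated"
    using diag_generated_add[OF diag_generated_smult[OF u, of "x 1"] diag_generated_smult[OF v, of "x 2"]]
    by simp
  then show "M \<in> generated"
    using gen_mat_group.mult[OF _ permB_power_generated, of "mon x 0" k] M by (simp add: mon_mult)
qed

lemma generated_eq: "generated = monomial_group"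
  using generated_subset_monomial_group monomial_group_subset_generated by blast

section \<open>Conjugacy classes\<close>

lemma conj_class_mon:
  "conj_class monomial_group (mon x k)
     = {mon (\<lambda>i. y i + x (i + j) - y (i + k)) k | y j. y \<in> exp_lattice}"
proof -
  have "conj_class monomial_group (mon x k)
      = (\<lambda>(y, j). mon y j ** mon x k ** matrix_inv (mon y j)) ` (exp_lattice \<times> UNIV)"
    unfolding conj_class_def monomial_group_def by auto
  then show ?thesis unfolding mon_conj by auto
qed

lemma conj_class_diag:
  "conj_class monomial_group (mon x 0)
     = {mon x 0, mon (\<lambda>i. x (i + 1)) 0, mon (\<lambda>i. x (i + 2)) 0}"
proof -
  have "conj_class monomial_group (mon x 0) = (\<lambda>j. mon (\<lambda>i. x (i + j)) 0) ` UNIV"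
    unfolding conj_class_mon using exp_lattice_zero by auto
  also have "\<dots> = (\<lambda>j. mon (\<lambda>i. x (i + j)) 0) ` {0, 1, 2}"
    using exhaust_3_zero by blast
  finally show ?thesis by simp
qed

definition class_invariant :: "(3 \<Rightarrow> int) \<Rightarrow> int" where
  "class_invariant x = (1 - int q) * x 1 + x 2"

definition class_modulus :: int where
  "class_modulus = gcd (int d) (int q ^ 2 - int q + 1)"

lemma class_modulus_pos: "class_modulus > 0"
  unfolding class_modulus_def using d_pos by simp

lemma class_modulus_eq: "class_modulus = int (gcd d (q ^ 2 - q + 1))"
proof -
  have "q \<le> q ^ 2" by (simp add: power2_eq_square)
  then have "int (q ^ 2 - q + 1) = int q ^ 2 - int q + 1" by (simp add: of_nat_diff)
  then show ?thesis unfolding class_modulus_def by (metis gcd_int_int_eq)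
qed

lemma class_invariant_congruent:
  assumes "\<And>i. int d dvd a i - b i"
  shows "class_modulus dvd class_invariant a - class_invariant b"
proof -
  have "class_invariant a - class_invariant b = (1 - int q) * (a 1 - b 1) + (a 2 - b 2)"
    unfolding class_invariant_def by (simp add: algebra_simps)
  moreover have "int d dvd (1 - int q) * (a 1 - b 1) + (a 2 - b 2)"
    using assms[of 1] assms[of 2] by simp
  ultimately show ?thesis
    using dvd_trans[of class_modulus "int d"] unfolding class_modulus_def by auto
qed

lemma class_invariant_shift1:
  assumes "x \<in> exp_lattice"
  shows "class_modulus dvd class_invariant x - class_invariant (\<lambda>i. x (i + 1))"
proof -
  have "class_invariant x - class_invariant (\<lambda>i. x (i + 1))
      = (int q ^ 2 - int q + 1) * x 1 - (int q ^ 2 * x 1 - int q * x 2 + x 0)"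
    unfolding class_invariant_def by (simp add: algebra_simps power2_eq_square three_eq_zero_3)
  moreover have "class_modulus dvd int q ^ 2 * x 1 - int q * x 2 + x 0"
    using assms unfolding in_exp_lattice class_modulus_def by (meson dvd_trans gcd_dvd1)
  ultimately show ?thesis unfolding class_modulus_def by (simp add: dvd_diff)
qed

lemma class_invariant_shift:
  assumes "x \<in> exp_lattice"
  shows "class_modulus dvd class_invariant x - class_invariant (\<lambda>i. x (i + j))"
proof -
  have 1: "class_modulus dvd class_invariant x - class_invariant (\<lambda>i. x (i + 1))"
    using class_invariant_shift1[OF assms] .
  have "class_modulus dvd class_invariant (\<lambda>i. x (i + 1)) - class_invariant (\<lambda>i. x (i + 2))"
    using class_invariant_shift1[OF exp_lattice_shift1[OF assms]] by (simp add: add.assoc)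
  from dvd_add[OF 1 this]
  have 2: "class_modulus dvd class_invariant x - class_invariant (\<lambda>i. x (i + 2))" by simp
  show ?thesis using exhaust_3_zero[of j] 1 2 by auto
qed

lemma exp_lattice_congruent:
  assumes "x \<in> exp_lattice" "y \<in> exp_lattice" "int d dvd x 1 - y 1" "int d dvd x 2 - y 2"
  shows "int d dvd x i - y i"
proof -
  have "x 0 - y 0 = (int q ^ 2 * x 1 - int q * x 2 + x 0) - (int q ^ 2 * y 1 - int q * y 2 + y 0)
      - int q ^ 2 * (x 1 - y 1) + int q * (x 2 - y 2)"
    by (simp add: algebra_simps)
  then have "int d dvd x 0 - y 0"
    using assms unfolding in_exp_lattice by (metis dvd_add dvd_diff dvd_mult)
  then show ?thesis using assms(3,4) exhaust_3_zero[of i] by auto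
qed

lemma coboundary_exists_shift1:
  assumes w: "w \<in> exp_lattice" and "class_modulus dvd class_invariant w"
  shows "\<exists>y\<in>exp_lattice. \<forall>i. int d dvd y i - y (i + 1) - w i"
proof -
  let ?m = "int q ^ 2 - int q + 1"
  obtain r where r: "class_invariant w = class_modulus * r" using assms(2) by blast
  obtain u v where uv: "u * ?m + v * int d = class_modulus"
    using bezout_int[of ?m "int d"] unfolding class_modulus_def by (metis gcd.commute)
  \<comment> \<open>Bezout makes \<open>(q\<^sup>2 - q + 1) a \<equiv> class_invariant w (mod d)\<close>, as coordinate 2 requires.\<close>
  define a where "a = u * r"
  define y where "y = triple (int q * (a - w 1) - int q ^ 2 * a) a (a - w 1)"
  have y: "y \<in> exp_lattice" unfolding y_def in_exp_lattice by simp
  let ?z = "\<lambda>i. y i - y (i + 1)"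
  have z: "?z \<in> exp_lattice"
    using exp_lattice_add[OF y exp_lattice_uminus[OF exp_lattice_shift1[OF y]]] by simp
  have "?z 2 - w 2 = ?m * a - class_invariant w"
    unfolding y_def class_invariant_def by (simp add: algebra_simps power2_eq_square three_eq_zero_3)
  also have "\<dots> = - (v * r) * int d" unfolding a_def r uv[symmetric] by (simp add: algebra_simps)
  finally have "int d dvd ?z 2 - w 2" by simp
  moreover have "int d dvd ?z 1 - w 1" unfolding y_def by simp
  ultimately show ?thesis using exp_lattice_congruent[OF z w] y by blast
qed

lemma coboundary_exists:
  assumes "w \<in> exp_lattice" "class_modulus dvd class_invariant w" "k \<noteq> 0"
  shows "\<exists>y\<in>exp_lattice. \<forall>i. int d dvd y i - y (i + k) - w i"
proof -
  obtain y where y: "y \<in> exp_lattice" and cob: "\<And>i. int d dvd y i - y (i + 1) - w i"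
    using coboundary_exists_shift1[OF assms(1,2)] by blast
  consider "k = 1" | "k = 2" using exhaust_3_zero[of k] assms(3) by auto
  then show ?thesis
  proof cases
    case 1
    then show ?thesis using y cob by blast
  next
    case 2
    have four: "(4::3) = 1" by simp
    have "y i + y (i + 2) - (y (i + 2) + y (i + 2 + 2)) = y i - y (i + 1)" for i
      by (simp add: add.assoc four)
    then show ?thesis
      using 2 cob exp_lattice_add[OF y exp_lattice_shift[OF y, of 2]]
      by (intro bexI[of _ "\<lambda>i. y i + y (i + 2)"]) auto
  qed
qed

lemma conj_class_nondiag:
  assumes x: "x \<in> exp_lattice" and "k \<noteq> 0"
  shows "conj_class monomial_group (mon x k)
    = {mon x' k | x'. x' \<in> exp_lattice \<and> class_modulus dvd class_invariant x' - class_invariant x}"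
proof (intro set_eqI iffI)
  fix N assume "N \<in> conj_class monomial_group (mon x k)"
  then obtain y j where N: "N = mon (\<lambda>i. y i + x (i + j) - y (i + k)) k" and y: "y \<in> exp_lattice"
    unfolding conj_class_mon by blast
  let ?x = "\<lambda>i. y i + x (i + j) - y (i + k)"
  have "?x \<in> exp_lattice"
    using exp_lattice_add[OF exp_lattice_add[OF y exp_lattice_shift[OF x]]
        exp_lattice_uminus[OF exp_lattice_shift[OF y]]]
    by simp
  moreover have "class_modulus dvd class_invariant ?x - class_invariant x"
  proof -
    have "class_invariant ?x - class_invariant x
        = (class_invariant y - class_invariant (\<lambda>i. y (i + k)))
          - (class_invariant x - class_invariant (\<lambda>i. x (i + j)))"
      unfolding class_invariant_def by (simp add: algebra_simps)
    then show ?thesis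
      using dvd_diff[OF class_invariant_shift[OF y, of k] class_invariant_shift[OF x, of j]] by (simp only:)
  qed
  ultimately show "N \<in> {mon x' k | x'. x' \<in> exp_lattice \<and> class_modulus dvd class_invariant x' - class_invariant x}"
    using N by blast
next
  fix N assume "N \<in> {mon x' k | x'. x' \<in> exp_lattice \<and> class_modulus dvd class_invariant x' - class_invariant x}"
  then obtain x' where N: "N = mon x' k" and x': "x' \<in> exp_lattice"
    and inv: "class_modulus dvd class_invariant x' - class_invariant x" by blast
  let ?w = "\<lambda>i. x' i + - x i"
  have "class_invariant ?w = class_invariant x' - class_invariant x"
    unfolding class_invariant_def by (simp add: algebra_simps)
  then obtain y where y: "y \<in> exp_lattice" and cob: "\<And>i. int d dvd y i - y (i + k) - ?w i"
    using coboundary_exists[OF exp_lattice_add[OF x' exp_lattice_uminus[OF x]] _ \<open>k \<noteq> 0\<close>] inv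
    by auto
  have "mon x' k = mon (\<lambda>i. y i + x (i + 0) - y (i + k)) k"
    unfolding mon_eq_iff using cob by (simp add: dvd_diff_commute algebra_simps)
  then show "N \<in> conj_class monomial_group (mon x k)"
    unfolding conj_class_mon N using y by blast
qed

section \<open>Counting the classes\<close>

definition reduced_lattice :: "(3 \<Rightarrow> int) set" where
  "reduced_lattice = {x \<in> exp_lattice. \<forall>i. 0 \<le> x i \<and> x i < int d}"

lemma mon_mod: "mon (\<lambda>i. x i mod int d) k = mon x k"
  unfolding mon_eq_iff by (simp add: mod_eq_dvd_iff[symmetric])

lemma exp_lattice_mod:
  assumes "x \<in> exp_lattice"
  shows "(\<lambda>i. x i mod int d) \<in> reduced_lattice"
proof -
  let ?D = "int d"
  have "int q ^ 2 * (x 1 mod ?D) - int q * (x 2 mod ?D) + x 0 mod ?D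
      = (int q ^ 2 * x 1 - int q * x 2 + x 0) - ?D * (int q ^ 2 * (x 1 div ?D) - int q * (x 2 div ?D) + x 0 div ?D)"
    by (simp add: minus_div_mult_eq_mod[symmetric] algebra_simps)
  then have "(\<lambda>i. x i mod ?D) \<in> exp_lattice"
    using assms unfolding in_exp_lattice by (simp add: dvd_diff)
  then show ?thesis using d_pos unfolding reduced_lattice_def by simp
qed

lemma image_mon_reduced_lattice:
  "(\<lambda>x. mon x k) ` exp_lattice = (\<lambda>x. mon x k) ` reduced_lattice"
proof
  show "(\<lambda>x. mon x k) ` exp_lattice \<subseteq> (\<lambda>x. mon x k) ` reduced_lattice"
  proof (rule image_subsetI)
    fix x assume "x \<in> exp_lattice"
    then show "mon x k \<in> (\<lambda>x. mon x k) ` reduced_lattice"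
      using image_eqI[where f = "\<lambda>x. mon x k", OF mon_mod[symmetric] exp_lattice_mod] by blast
  qed
qed (auto simp: reduced_lattice_def)

lemma inj_on_mon_reduced_lattice: "inj_on (\<lambda>x. mon x k) reduced_lattice"
proof
  fix x y assume "x \<in> reduced_lattice" "y \<in> reduced_lattice" "mon x k = mon y k"
  then show "x = y"
    unfolding mon_eq_iff reduced_lattice_def by (auto intro!: residues_eq simp: fun_eq_iff)
qed

lemma bij_betw_reduced_lattice:
  "bij_betw (\<lambda>x. (x 1, x 2)) reduced_lattice ({0..<int d} \<times> {0..<int d})"
proof (rule bij_betw_imageI)
  show "inj_on (\<lambda>x. (x 1, x 2)) reduced_lattice"
  proof
    fix x y assume x: "x \<in> reduced_lattice" and y: "y \<in> reduced_lattice" and "(x 1, x 2) = (y 1, y 2)"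
    then have "int d dvd x i - y i" for i
      using exp_lattice_congruent[of x y] unfolding reduced_lattice_def by simp
    then show "x = y"
      using x y unfolding reduced_lattice_def by (auto intro!: residues_eq simp: fun_eq_iff)
  qed
  show "(\<lambda>x. (x 1, x 2)) ` reduced_lattice = {0..<int d} \<times> {0..<int d}"
  proof
    show "{0..<int d} \<times> {0..<int d} \<subseteq> (\<lambda>x. (x 1, x 2)) ` reduced_lattice"
    proof clarify
      fix a b assume ab: "a \<in> {0..<int d}" "b \<in> {0..<int d}"
      let ?c = "int q * b - int q ^ 2 * a"
      have "int d dvd ?c mod int d - ?c" using mod_eq_dvd_iff[of "?c mod int d" "int d" ?c] by simp
      then have "triple (?c mod int d) a b \<in> exp_lattice"
        unfolding in_exp_lattice by (simp add: algebra_simps)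
      then have "triple (?c mod int d) a b \<in> reduced_lattice"
        using ab d_pos unfolding reduced_lattice_def forall_3_zero by simp
      then show "(a, b) \<in> (\<lambda>x. (x 1, x 2)) ` reduced_lattice"
        by (intro image_eqI[of _ _ "triple (?c mod int d) a b"]) simp_all
    qed
  qed (auto simp: reduced_lattice_def)
qed

lemma finite_reduced_lattice: "finite reduced_lattice"
  using bij_betw_finite[OF bij_betw_reduced_lattice] by simp

lemma card_reduced_lattice: "card reduced_lattice = d ^ 2"
  using bij_betw_same_card[OF bij_betw_reduced_lattice] by (simp add: power2_eq_square)

lemma mon_in_conj_class: "mon x k \<in> conj_class monomial_group (mon x k)"
  unfolding conj_class_mon by (intro CollectI exI[of _ "\<lambda>i. 0"] exI[of _ 0]) (simp add: exp_lattice_zero)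

lemma conj_class_nondiag_eq_iff:
  assumes x: "x \<in> exp_lattice" and y: "y \<in> exp_lattice" and "k \<noteq> 0"
  shows "conj_class monomial_group (mon x k) = conj_class monomial_group (mon y k)
    \<longleftrightarrow> class_modulus dvd class_invariant x - class_invariant y"
proof
  assume "conj_class monomial_group (mon x k) = conj_class monomial_group (mon y k)"
  then obtain x' where x': "mon x k = mon x' k" and x'y: "class_modulus dvd class_invariant x' - class_invariant y"
    using mon_in_conj_class[of x k] unfolding conj_class_nondiag[OF y \<open>k \<noteq> 0\<close>] by blast
  have "class_modulus dvd class_invariant x - class_invariant x'"
    by (rule class_invariant_congruent) (use x' in \<open>simp add: mon_eq_iff\<close>)
  from dvd_add[OF this x'y] show "class_modulus dvd class_invariant x - class_invariant y" by simp
next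
  assume xy: "class_modulus dvd class_invariant x - class_invariant y"
  have "class_modulus dvd c - class_invariant x \<longleftrightarrow> class_modulus dvd c - class_invariant y" for c
    using dvd_add_left_iff[OF xy, of "c - class_invariant x"] by simp
  then show "conj_class monomial_group (mon x k) = conj_class monomial_group (mon y k)"
    unfolding conj_class_nondiag[OF x \<open>k \<noteq> 0\<close>] conj_class_nondiag[OF y \<open>k \<noteq> 0\<close>] by simp
qed

lemma card_nondiag_classes:
  assumes "k \<noteq> 0"
  shows "card (conj_class monomial_group ` (\<lambda>x. mon x k) ` exp_lattice) = nat class_modulus"
proof -
  let ?rep = "\<lambda>r. triple (int q * r) 0 r"
  let ?cls = "\<lambda>r. conj_class monomial_group (mon (?rep r) k)"
  have rep: "?rep r \<in> exp_lattice" "class_invariant (?rep r) = r" for r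
    unfolding in_exp_lattice class_invariant_def by simp_all
  note cls_eq_iff = conj_class_nondiag_eq_iff[OF _ _ assms]
  have "conj_class monomial_group (mon x k) = ?cls (class_invariant x mod class_modulus)"
    if "x \<in> exp_lattice" for x
    using cls_eq_iff[OF that rep(1)] mod_eq_dvd_iff[of "class_invariant x" class_modulus] by (simp add: rep(2))
  then have "conj_class monomial_group ` (\<lambda>x. mon x k) ` exp_lattice
      = ?cls ` (\<lambda>x. class_invariant x mod class_modulus) ` exp_lattice"
    unfolding image_image by (rule image_cong[OF refl])
  also have "(\<lambda>x. class_invariant x mod class_modulus) ` exp_lattice = {0..<class_modulus}"
  proof
    show "{0..<class_modulus} \<subseteq> (\<lambda>x. class_invariant x mod class_modulus) ` exp_lattice"
    proof
      fix r assume "r \<in> {0..<class_modulus}"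
      then have "r = class_invariant (?rep r) mod class_modulus" by (simp add: rep(2))
      then show "r \<in> (\<lambda>x. class_invariant x mod class_modulus) ` exp_lattice" using rep(1) by blast
    qed
  qed (use class_modulus_pos in auto)
  moreover have "inj_on ?cls {0..<class_modulus}"
  proof (rule inj_onI)
    fix r s assume r: "r \<in> {0..<class_modulus}" and s: "s \<in> {0..<class_modulus}" and "?cls r = ?cls s"
    then have "class_modulus dvd r - s" using cls_eq_iff[OF rep(1) rep(1), of r s] by (simp add: rep(2))
    then show "r = s" using r s residues_eq[of r class_modulus s] by simp
  qed
  ultimately show ?thesis by (simp add: card_image)
qed

lemma card_shift_fixed_reduced_lattice:
  "card {x \<in> reduced_lattice. (\<lambda>i. x (i + 1)) = x} = nat class_modulus"
proof -
  let ?m = "int q ^ 2 - int q + 1"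
  let ?C = "{c. 0 \<le> c \<and> c < int d \<and> int d dvd ?m * c}"
  have const: "(\<lambda>i. x (i + 1)) = x \<longleftrightarrow> x = (\<lambda>i. x 0)" for x :: "3 \<Rightarrow> int"
    by (auto simp: fun_eq_iff forall_3_zero three_eq_zero_3)
  have "{x \<in> reduced_lattice. (\<lambda>i. x (i + 1)) = x} = (\<lambda>c. \<lambda>i. c) ` ?C"
  proof (intro set_eqI iffI)
    fix x assume "x \<in> {x \<in> reduced_lattice. (\<lambda>i. x (i + 1)) = x}"
    then have x: "x = (\<lambda>i. x 0)" "(\<lambda>i. x 0) \<in> reduced_lattice" using const by auto
    from x(2) have "x 0 \<in> ?C" unfolding reduced_lattice_def by (simp add: exp_lattice_const_iff)
    with x(1) show "x \<in> (\<lambda>c. \<lambda>i. c) ` ?C" by (rule image_eqI)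
  next
    fix x :: "3 \<Rightarrow> int" assume "x \<in> (\<lambda>c. \<lambda>i. c) ` ?C"
    then obtain c where "c \<in> ?C" "x = (\<lambda>i. c)" by blast
    then show "x \<in> {x \<in> reduced_lattice. (\<lambda>i. x (i + 1)) = x}"
      unfolding reduced_lattice_def by (simp add: exp_lattice_const_iff)
  qed
  moreover have "inj_on (\<lambda>c. \<lambda>i::3. c) ?C" by (simp add: inj_on_def fun_eq_iff)
  ultimately show ?thesis
    using card_annihilated_residues[of "int d" ?m] d_pos by (simp add: card_image class_modulus_def)
qed

lemma reduced_lattice_shift1: "x \<in> reduced_lattice \<Longrightarrow> (\<lambda>i. x (i + 1)) \<in> reduced_lattice"
  unfolding reduced_lattice_def using exp_lattice_shift1 by auto

lemma card_diag_classes: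
  "3 * card (conj_class monomial_group ` (\<lambda>x. mon x 0) ` exp_lattice) = d ^ 2 + 2 * nat class_modulus"
proof -
  define t where "t M = permB ** M ** matrix_inv permB" for M
  let ?S = "(\<lambda>x. mon x 0) ` reduced_lattice"
  have t_mon: "t (mon x 0) = mon (\<lambda>i. x (i + 1)) 0" for x
    unfolding t_def permB_eq_monomial_mat[of \<xi>] mon_conj by simp
  have "conj_class monomial_group M = {M, t M, t (t M)}" if "M \<in> ?S" for M
    using that by (auto simp: conj_class_diag t_mon add.assoc)
  then have "conj_class monomial_group ` ?S = (\<lambda>M. {M, t M, t (t M)}) ` ?S"
    by (rule image_cong[OF refl])
  moreover have "3 * card ((\<lambda>M. {M, t M, t (t M)}) ` ?S) = card ?S + 2 * card {M \<in> ?S. t M = M}"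
    using finite_reduced_lattice reduced_lattice_shift1
    by (intro card_orbits_order_3) (auto simp: t_mon add.assoc three_eq_zero_3)
  moreover have "card ?S = d ^ 2"
    using card_image[OF inj_on_mon_reduced_lattice] card_reduced_lattice by simp
  moreover have "{M \<in> ?S. t M = M} = (\<lambda>x. mon x 0) ` {x \<in> reduced_lattice. (\<lambda>i. x (i + 1)) = x}"
  proof (intro set_eqI iffI)
    fix M assume "M \<in> {M \<in> ?S. t M = M}"
    then obtain x where x: "x \<in> reduced_lattice" "M = mon x 0" "mon (\<lambda>i. x (i + 1)) 0 = mon x 0"
      by (auto simp: t_mon)
    have "(\<lambda>i. x (i + 1)) = x"
      by (rule inj_onD[OF inj_on_mon_reduced_lattice x(3) reduced_lattice_shift1[OF x(1)] x(1)])
    then show "M \<in> (\<lambda>x. mon x 0) ` {x \<in> reduced_lattice. (\<lambda>i. x (i + 1)) = x}" using x by blast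
  qed (auto simp: t_mon)
  moreover have "inj_on (\<lambda>x. mon x 0) {x \<in> reduced_lattice. (\<lambda>i. x (i + 1)) = x}"
    by (rule inj_on_subset[OF inj_on_mon_reduced_lattice]) blast
  ultimately show ?thesis
    unfolding image_mon_reduced_lattice by (simp add: card_image card_shift_fixed_reduced_lattice)
qed

lemma card_conj_classes:
  "3 * card (conj_classes monomial_group) = d ^ 2 + 8 * nat class_modulus"
proof -
  define C where "C k = conj_class monomial_group ` (\<lambda>x. mon x k) ` exp_lattice" for k
  have "monomial_group = (\<Union>k. (\<lambda>x. mon x k) ` exp_lattice)"
    unfolding monomial_group_def by blast
  then have "conj_classes monomial_group = conj_class monomial_group ` (\<Union>k. (\<lambda>x. mon x k) ` exp_lattice)"
    unfolding conj_classes_def by (rule arg_cong)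
  also have "\<dots> = (\<Union>k. C k)" unfolding C_def by (rule image_UN)
  finally have classes: "conj_classes monomial_group = (\<Union>k. C k)" .
  have finite: "finite (C k)" for k
    unfolding C_def image_mon_reduced_lattice using finite_reduced_lattice by simp
  have disjoint: "C k \<inter> C l = {}" if "k \<noteq> l" for k l
  proof -
    have other: "mon x k \<notin> conj_class monomial_group (mon y l)" for x y
      using that unfolding conj_class_mon by (auto simp: mon_eq_iff)
    show ?thesis
    proof (rule ccontr)
      assume "C k \<inter> C l \<noteq> {}"
      then obtain x y where "conj_class monomial_group (mon x k) = conj_class monomial_group (mon y l)"
        unfolding C_def by blast
      then show False using mon_in_conj_class[of x k] other[of x y] by simp
    qed
  qed
  have "card (conj_classes monomial_group) = (\<Sum>k\<in>UNIV. card (C k))"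
    unfolding classes using finite disjoint by (intro card_UN_disjoint) auto
  also have "\<dots> = card (C 0) + card (C 1) + card (C 2)"
  proof -
    have univ: "(UNIV :: 3 set) = {0, 1, 2}" using exhaust_3_zero by auto
    show ?thesis unfolding univ by simp
  qed
  finally show ?thesis
    using card_diag_classes card_nondiag_classes[of 1] card_nondiag_classes[of 2] unfolding C_def by simp
qed

end

theorem mainTheorem9:
  fixes d q :: nat and \<xi> :: complex
  assumes "q < d" and "gcd d q = 1" and "d dvd q ^ 3 + 1"
    and "primitive_root_of_unity d \<xi>"
  shows "real (card (conj_classes (gen_mat_group {diagA \<xi> q, permB})))
           = (real d ^ 2 + 8 * real (gcd d (q ^ 2 - q + 1))) / 3"
proof -
  interpret diag_perm_group d q \<xi> using assms(2-4) by unfold_locales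
  have "3 * card (conj_classes generated) = d ^ 2 + 8 * gcd d (q ^ 2 - q + 1)"
    using card_conj_classes unfolding generated_eq class_modulus_eq by simp
  then have "real (3 * card (conj_classes generated)) = real (d ^ 2 + 8 * gcd d (q ^ 2 - q + 1))"
    by (rule arg_cong)
  then show ?thesis by simp
qed

end
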